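(* Let $\lambda\in(0,1)$ and let $G$ be a finite simple connected graph with $n\ge 2$ vertices. Then $$\min_{1\le D\le n-1}\left[\frac{\lambda\left[1-(D+1)\lambda^{D}+D\lambda^{D+1}\right]}{(\lambda-1)^2}+(n-D-1)D\lambda^{D}\right]\;\le\; mt^{e}_{\lambda}(G).$$ Moreover, this lower bound is attained at the starting vertex of a broom on $n$ vertices, i.e. there is a broom $B$ on $n$ vertices with $mt^{e}_{\lambda}(B)$ equal to the left-hand side, the minimum of $t^e_\lambda$ over the vertices of $B$ being attained at its starting vertex.
   Context: $d(u,v)$ denotes graph distance. For a vertex $u$ of $G=(V,E)$, $t^{e}_{\lambda}(u)=\sum_{v\in V\setminus\{u\}} d(u,v)\lambda^{d(u,v)}$, and $mt^{e}_{\lambda}(G)=\min\{t^{e}_{\lambda}(u):u\in V\}$. A broom on $n$ vertices (with parameter $D$, $1\le D\le n-1$) is the graph consisting of a path $u=v_0v_1\cdots v_D$ together with $n-D-1$ further vertices, each adjacent only to $v_{D-1}$; equivalently, it is obtained by identifying a pendant vertex of a star with an end-vertex of a path. The vertex $u=v_0$ is called the starting vertex of the broom. *)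

theory Defs
  imports Complex_Main
begin

definition simple_graph :: "'a set \<Rightarrow> ('a \<Rightarrow> 'a \<Rightarrow> bool) \<Rightarrow> bool" where
  "simple_graph V E \<longleftrightarrow> finite V \<and> (\<forall>u v. E u v \<longrightarrow> u \<in> V \<and> v \<in> V)
     \<and> (\<forall>u v. E u v \<longrightarrow> E v u) \<and> (\<forall>u. \<not> E u u)"

definition walk :: "'a set \<Rightarrow> ('a \<Rightarrow> 'a \<Rightarrow> bool) \<Rightarrow> 'a list \<Rightarrow> bool" where
  "walk V E xs \<longleftrightarrow> xs \<noteq> [] \<and> set xs \<subseteq> V \<and> successively E xs"

definition connected_graph :: "'a set \<Rightarrow> ('a \<Rightarrow> 'a \<Rightarrow> bool) \<Rightarrow> bool" where
  "connected_graph V E \<longleftrightarrow>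
     (\<forall>u\<in>V. \<forall>v\<in>V. \<exists>xs. walk V E xs \<and> hd xs = u \<and> last xs = v)"

definition gdist :: "'a set \<Rightarrow> ('a \<Rightarrow> 'a \<Rightarrow> bool) \<Rightarrow> 'a \<Rightarrow> 'a \<Rightarrow> nat" where
  "gdist V E u v = (LEAST k. \<exists>xs. walk V E xs \<and> hd xs = u \<and> last xs = v \<and> length xs = k + 1)"

definition te :: "'a set \<Rightarrow> ('a \<Rightarrow> 'a \<Rightarrow> bool) \<Rightarrow> real \<Rightarrow> 'a \<Rightarrow> real" where
  "te V E lam u = (\<Sum>v\<in>V - {u}. real (gdist V E u v) * lam ^ gdist V E u v)"

definition mte :: "'a set \<Rightarrow> ('a \<Rightarrow> 'a \<Rightarrow> bool) \<Rightarrow> real \<Rightarrow> real" where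
  "mte V E lam = Min (te V E lam ` V)"

(* broom on vertex set {0..<n} with parameter D: path 0-1-...-D, and vertices
   D+1,...,n-1 adjacent only to D-1.  Starting vertex is 0. *)
definition broom_adj :: "nat \<Rightarrow> nat \<Rightarrow> nat \<Rightarrow> nat \<Rightarrow> bool" where
  "broom_adj n D i j \<longleftrightarrow> i < n \<and> j < n \<and>
     ((j = i + 1 \<and> j \<le> D) \<or> (i = j + 1 \<and> i \<le> D) \<or>
      (i = D - 1 \<and> D < j) \<or> (j = D - 1 \<and> D < i))"

definition broom_bound :: "real \<Rightarrow> nat \<Rightarrow> nat \<Rightarrow> real" where
  "broom_bound lam n D = lam * (1 - real (D + 1) * lam ^ D + real D * lam ^ (D + 1)) / (lam - 1)^2
      + real (n - D - 1) * real D * lam ^ D"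

end

theory Submission
  imports Defs
begin

text \<open>Fix a vertex u and write f k = k \<lambda>^k, so that t(u) is the sum of f(d(u,v)) over v \<noteq> u.
  Distances from u change by at most one along an edge, so the distances of the other vertices
  fill an interval {1..e} without gaps. Keep one vertex at each distance and let j minimise f
  on {1..e}: moving all remaining vertices to distance j, and then every distance in {j+1..e}
  down to j, does not increase the sum, and the result is t at the starting vertex of the
  broom with parameter j. Since this bound holds for every graph, that starting vertex attains
  the minimum of t on the broom.\<close>

text \<open>With f k = k \<lambda>^k and m = n - 1 this is t at the starting vertex of the broom with
  parameter j on n vertices.\<close>
definition layer_bound :: "(nat \<Rightarrow> real) \<Rightarrow> nat \<Rightarrow> nat \<Rightarrow> real" where
  "layer_bound f m j = (\<Sum>k=1..j. f k) + real (m - j) * f j"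

lemma sum_comp_eq_sum_level_card:
  assumes "finite S"
  shows "(\<Sum>v\<in>S. f (d v)) = (\<Sum>k\<in>d ` S. real (card {v \<in> S. d v = k}) * f k)"
proof -
  have "(\<Sum>v\<in>S. f (d v)) = (\<Sum>k\<in>d ` S. \<Sum>v\<in>{v \<in> S. d v = k}. f (d v))"
    by (rule sum.image_gen[OF assms])
  also have "\<dots> = (\<Sum>k\<in>d ` S. real (card {v \<in> S. d v = k}) * f k)"
    by (rule sum.cong) auto
  finally show ?thesis .
qed

lemma sum_comp_ge_sum_interval:
  fixes f :: "nat \<Rightarrow> real" and d :: "'a \<Rightarrow> nat"
  assumes "finite S" and img: "d ` S = {1..e}" and min: "\<And>k. k \<in> {1..e} \<Longrightarrow> f j \<le> f k"
  shows "(\<Sum>k=1..e. f k) + (real (card S) - real e) * f j \<le> (\<Sum>v\<in>S. f (d v))"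
proof -
  define c where "c k = real (card {v \<in> S. d v = k})" for k
  have c_ge_1: "1 \<le> c k" if "k \<in> {1..e}" for k
  proof -
    have "{v \<in> S. d v = k} \<noteq> {}" using that img by (metis (mono_tags, lifting) empty_Collect_eq imageE)
    then show ?thesis unfolding c_def using \<open>finite S\<close> by (simp add: Suc_le_eq card_gt_0_iff)
  qed
  have sum_c: "(\<Sum>k=1..e. c k) = real (card S)"
    using sum_comp_eq_sum_level_card[OF \<open>finite S\<close>, of "\<lambda>_. 1" d] img by (simp add: c_def)
  have "(\<Sum>k=1..e. f k + (c k - 1) * f j) \<le> (\<Sum>k=1..e. c k * f k)"
  proof (rule sum_mono)
    fix k assume k: "k \<in> {1..e}"
    have "0 \<le> (c k - 1) * (f k - f j)" using c_ge_1[OF k] min[OF k] by simp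
    then show "f k + (c k - 1) * f j \<le> c k * f k" by (simp add: algebra_simps)
  qed
  also have "(\<Sum>k=1..e. c k * f k) = (\<Sum>v\<in>S. f (d v))"
    using sum_comp_eq_sum_level_card[OF \<open>finite S\<close>, of f d] img by (simp add: c_def)
  finally show ?thesis
    using sum_c by (simp add: sum.distrib sum_subtractf sum_distrib_right[symmetric])
qed

lemma layer_bound_le_sum_interval:
  fixes f :: "nat \<Rightarrow> real"
  assumes j: "j \<in> {1..e}" and "e \<le> m" and min: "\<And>k. k \<in> {1..e} \<Longrightarrow> f j \<le> f k"
  shows "layer_bound f m j \<le> (\<Sum>k=1..e. f k) + (real m - real e) * f j"
proof -
  have "(\<Sum>k=1..e. f k) = (\<Sum>k=1..j. f k) + (\<Sum>k=Suc j..e. f k)"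
    using j by (subst sum.union_disjoint[symmetric]) (auto intro: sum.cong)
  moreover have "real (e - j) * f j \<le> (\<Sum>k=Suc j..e. f k)"
    using sum_mono[of "{Suc j..e}" "\<lambda>_. f j" f] j min by simp
  ultimately show ?thesis
    using j \<open>e \<le> m\<close> unfolding layer_bound_def by (simp add: of_nat_diff algebra_simps)
qed

lemma layer_bound_le_sum_comp:
  fixes f :: "nat \<Rightarrow> real" and d :: "'a \<Rightarrow> nat"
  assumes "finite S" "S \<noteq> {}" and img: "d ` S = {1..e}"
  shows "\<exists>j\<in>{1..card S}. layer_bound f (card S) j \<le> (\<Sum>v\<in>S. f (d v))"
proof -
  have "e \<le> card S" using img card_image_le[OF \<open>finite S\<close>, of d] by simp
  have "{1..e} \<noteq> {}" using img \<open>S \<noteq> {}\<close> by blast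
  then obtain j where j: "j \<in> {1..e}" "f j = Min (f ` {1..e})"
    using Min_in[of "f ` {1..e}"] by (metis finite_atLeastAtMost finite_imageI image_iff image_is_empty)
  then have min: "\<And>k. k \<in> {1..e} \<Longrightarrow> f j \<le> f k" by simp
  have "layer_bound f (card S) j \<le> (\<Sum>v\<in>S. f (d v))"
    using layer_bound_le_sum_interval[of j e "card S" f, OF j(1) \<open>e \<le> card S\<close> min]
      sum_comp_ge_sum_interval[OF assms(1) img, of f j, OF min] by linarith
  moreover have "j \<in> {1..card S}" using j(1) \<open>e \<le> card S\<close> by simp
  ultimately show ?thesis by blast
qed

lemma sum_k_power_closed_form:
  fixes lam :: real assumes "lam \<noteq> 1"
  shows "(\<Sum>k=1..D. real k * lam ^ k)
    = lam * (1 - real (D + 1) * lam ^ D + real D * lam ^ (D + 1)) / (lam - 1)^2"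
proof (induction D)
  case (Suc D)
  have "(lam - 1)^2 \<noteq> 0" using assms by simp
  with Suc show ?case by (simp add: field_simps power2_eq_square)
qed simp

lemma broom_bound_eq_layer_bound:
  fixes lam :: real assumes "lam \<noteq> 1"
  shows "broom_bound lam n D = layer_bound (\<lambda>k. real k * lam ^ k) (n - 1) D"
  unfolding broom_bound_def layer_bound_def sum_k_power_closed_form[OF assms]
  by (simp add: diff_commute)

lemma simple_graph_finite: "simple_graph V E \<Longrightarrow> finite V"
  by (simp add: simple_graph_def)

lemma successively_potential_le:
  assumes "successively E xs" "xs \<noteq> []" "\<And>a b. E a b \<Longrightarrow> p b \<le> p a + (1::nat)"
  shows "p (last xs) \<le> p (hd xs) + (length xs - 1)"
  using assms
proof (induction xs rule: induct_list012)
  case (3 x y xs)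
  then have "p (last (y # xs)) \<le> p y + length xs" by auto
  moreover have "p y \<le> p x + 1" using 3 by auto
  ultimately show ?case by simp
qed auto

lemma gdist_le_walk_length:
  assumes "walk V E xs" "hd xs = u" "last xs = v"
  shows "gdist V E u v \<le> length xs - 1"
proof -
  have "\<exists>ys. walk V E ys \<and> hd ys = u \<and> last ys = v \<and> length ys = (length xs - 1) + 1"
    using assms by (intro exI[of _ xs]) (auto simp: walk_def)
  then show ?thesis unfolding gdist_def by (rule Least_le)
qed

lemma shortest_walk:
  assumes "\<exists>xs. walk V E xs \<and> hd xs = u \<and> last xs = v"
  obtains xs where "walk V E xs" "hd xs = u" "last xs = v" "length xs = gdist V E u v + 1"
proof -
  from assms obtain xs where xs: "walk V E xs" "hd xs = u" "last xs = v" by blast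
  then have "\<exists>k xs. walk V E xs \<and> hd xs = u \<and> last xs = v \<and> length xs = k + 1"
    by (intro exI[of _ "length xs - 1"] exI[of _ xs]) (auto simp: walk_def)
  from LeastI_ex[OF this] that show ?thesis unfolding gdist_def by blast
qed

lemma potential_le_gdist:
  assumes "\<exists>xs. walk V E xs \<and> hd xs = u \<and> last xs = v"
    and "\<And>a b. E a b \<Longrightarrow> p b \<le> p a + (1::nat)" and "p u = 0"
  shows "p v \<le> gdist V E u v"
proof -
  obtain xs where "walk V E xs" "hd xs = u" "last xs = v" "length xs = gdist V E u v + 1"
    using shortest_walk[OF assms(1)] by blast
  then show ?thesis using successively_potential_le[of E xs p] assms(2,3) by (auto simp: walk_def)
qed

context
  fixes V :: "'a set" and E u
  assumes sg: "simple_graph V E" and cg: "connected_graph V E" and uV: "u \<in> V"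
begin

lemma reachable: "v \<in> V \<Longrightarrow> \<exists>xs. walk V E xs \<and> hd xs = u \<and> last xs = v"
  using cg uV unfolding connected_graph_def by blast

lemma gdist_self: "gdist V E u u = 0"
  using gdist_le_walk_length[of V E "[u]" u u] uV by (auto simp: walk_def)

lemma gdist_ge_1:
  assumes "v \<in> V" "v \<noteq> u"
  shows "1 \<le> gdist V E u v"
proof (rule ccontr)
  assume "\<not> 1 \<le> gdist V E u v"
  then have "gdist V E u v = 0" by simp
  moreover obtain xs where "walk V E xs" "hd xs = u" "last xs = v" "length xs = gdist V E u v + 1"
    using shortest_walk[OF reachable[OF assms(1)]] by blast
  ultimately have "u = v" by (cases xs) auto
  with assms show False by simp
qed

lemma gdist_neighbour_le:
  assumes "w \<in> V" "E w v"
  shows "gdist V E u v \<le> gdist V E u w + 1"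
proof -
  obtain xs where xs: "walk V E xs" "hd xs = u" "last xs = w" "length xs = gdist V E u w + 1"
    using shortest_walk[OF reachable[OF assms(1)]] by blast
  have "v \<in> V" using sg assms unfolding simple_graph_def by blast
  then have "walk V E (xs @ [v])"
    using xs assms unfolding walk_def by (auto simp: successively_append_iff)
  then show ?thesis
    using gdist_le_walk_length[of V E "xs @ [v]" u v] xs by (auto simp: walk_def)
qed

lemma gdist_attains_intermediate:
  assumes "v \<in> V" "1 \<le> k" "k \<le> gdist V E u v"
  shows "\<exists>w\<in>V - {u}. gdist V E u w = k"
proof -
  let ?N = "gdist V E u v"
  obtain xs where xs: "walk V E xs" "hd xs = u" "last xs = v" "length xs = ?N + 1"
    using shortest_walk[OF reachable[OF assms(1)]] by blast
  define g where "g i = gdist V E u (xs ! i)" for i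
  have xsV: "xs ! i \<in> V" if "i \<le> ?N" for i
    using xs that unfolding walk_def by (metis Suc_eq_plus1 in_mono le_imp_less_Suc nth_mem)
  have "E (xs ! i) (xs ! Suc i)" if "i < ?N" for i
    using xs that successively_nth[of E xs i] unfolding walk_def by auto
  then have g_step: "g (Suc i) \<le> g i + 1" if "i < ?N" for i
    unfolding g_def using gdist_neighbour_le xsV that by auto
  have g_lipschitz: "g j \<le> g i + (j - i)" if "i \<le> j" "j \<le> ?N" for i j
    using that
  proof (induction j rule: dec_induct)
    case (step j)
    then show ?case using g_step[of j] by simp
  qed simp
  have "g 0 = 0" unfolding g_def using xs gdist_self by (cases xs) auto
  moreover have "g ?N = ?N" unfolding g_def using xs last_conv_nth[of xs] by (cases xs) auto
  ultimately have gk: "g k = k"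
    using g_lipschitz[of 0 k] g_lipschitz[of k ?N] assms by simp
  then have "xs ! k \<noteq> u" using gdist_self assms unfolding g_def by auto
  with gk xsV[of k] assms show ?thesis unfolding g_def by blast
qed

lemma gdist_image_interval:
  assumes "V - {u} \<noteq> {}"
  shows "gdist V E u ` (V - {u}) = {1..Max (gdist V E u ` (V - {u}))}"
    (is "?D = {1..?e}")
proof (rule equalityI)
  have "finite ?D" using simple_graph_finite[OF sg] by simp
  show "?D \<subseteq> {1..?e}"
  proof
    fix k assume k: "k \<in> ?D"
    then obtain w where w: "w \<in> V" "w \<noteq> u" "k = gdist V E u w" by blast
    have "1 \<le> k" using gdist_ge_1[OF w(1,2)] w(3) by simp
    moreover have "k \<le> ?e" using Max_ge[OF \<open>finite ?D\<close> k] .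
    ultimately show "k \<in> {1..?e}" by simp
  qed
  have "?e \<in> ?D" using Max_in[OF \<open>finite ?D\<close>] assms by blast
  then obtain v where v: "?e = gdist V E u v" "v \<in> V - {u}" by (rule imageE)
  show "{1..?e} \<subseteq> ?D"
  proof
    fix k assume "k \<in> {1..?e}"
    then obtain w where "w \<in> V - {u}" "gdist V E u w = k"
      using gdist_attains_intermediate[of v k] v by auto
    then show "k \<in> ?D" by (metis image_eqI)
  qed
qed

lemma Min_broom_bound_le_te:
  fixes lam :: real
  assumes "lam \<noteq> 1" and "card V \<ge> 2"
  shows "Min (broom_bound lam (card V) ` {1..card V - 1}) \<le> te V E lam u"
proof -
  have "finite V" using simple_graph_finite[OF sg] .
  then have card: "card (V - {u}) = card V - 1" using uV by simp
  with assms(2) have "card (V - {u}) \<noteq> 0" by simp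
  then have "V - {u} \<noteq> {}" by (metis card.empty)
  from layer_bound_le_sum_comp[OF _ this gdist_image_interval[OF this], of "\<lambda>k. real k * lam ^ k"]
  obtain j where "j \<in> {1..card V - 1}" "broom_bound lam (card V) j \<le> te V E lam u"
    using \<open>finite V\<close> card by (auto simp: te_def broom_bound_eq_layer_bound[OF assms(1)])
  moreover have "Min (broom_bound lam (card V) ` {1..card V - 1}) \<le> broom_bound lam (card V) j"
    using \<open>j \<in> _\<close> by (intro Min_le) auto
  ultimately show ?thesis by linarith
qed

end

lemma Min_broom_bound_le_mte:
  fixes lam :: real
  assumes "simple_graph V E" "connected_graph V E" "lam \<noteq> 1" "card V \<ge> 2"
  shows "Min (broom_bound lam (card V) ` {1..card V - 1}) \<le> mte V E lam"
proof -
  have "finite V" "V \<noteq> {}" using simple_graph_finite[OF assms(1)] assms(4) by auto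
  then have "mte V E lam \<in> te V E lam ` V" unfolding mte_def by (intro Min_in) auto
  then show ?thesis using Min_broom_bound_le_te[OF assms(1,2) _ assms(3,4)] by auto
qed

lemma connected_graph_if_reachable_from:
  assumes sg: "simple_graph V E" and r: "\<forall>v\<in>V. \<exists>xs. walk V E xs \<and> hd xs = r \<and> last xs = v"
  shows "connected_graph V E"
  unfolding connected_graph_def
proof (intro ballI)
  fix u v assume "u \<in> V" "v \<in> V"
  then obtain xs ys where xs: "walk V E xs" "hd xs = r" "last xs = u"
    and ys: "walk V E ys" "hd ys = r" "last ys = v" using r by blast
  obtain ys' where ys': "ys = r # ys'" using ys unfolding walk_def by (cases ys) auto
  have "successively E (rev xs)"
    using xs sg unfolding walk_def simple_graph_def by (auto intro: successively_mono)
  moreover have "successively E ys'" "ys' = [] \<or> E r (hd ys')"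
    using ys ys' unfolding walk_def by (auto simp: successively_Cons)
  moreover have "last (rev xs) = r" using xs unfolding walk_def by (simp add: last_rev)
  ultimately have "walk V E (rev xs @ ys')"
    using xs ys ys' unfolding walk_def by (simp add: successively_append_iff)
  moreover have "hd (rev xs @ ys') = u" using xs unfolding walk_def by (simp add: hd_rev)
  moreover have "last (rev xs @ ys') = v" using ys ys' \<open>last (rev xs) = r\<close> by (cases "ys' = []") auto
  ultimately show "\<exists>zs. walk V E zs \<and> hd zs = u \<and> last zs = v" by blast
qed

lemma broom_simple_graph: "simple_graph {0..<n} (broom_adj n D)"
  unfolding simple_graph_def broom_adj_def by auto

lemma broom_path_walk:
  assumes "i \<le> D" "i < n"
  shows "walk {0..<n} (broom_adj n D) [0..<Suc i]"
proof -
  have "successively (broom_adj n D) [0..<Suc i]"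
    using assms unfolding successively_conv_nth broom_adj_def by (simp del: upt_Suc)
  then show ?thesis using assms unfolding walk_def by (auto simp del: upt_Suc)
qed

lemma broom_walk_from_start:
  assumes "1 \<le> D" "D \<le> n - 1" "i < n"
  shows "\<exists>xs. walk {0..<n} (broom_adj n D) xs \<and> hd xs = 0 \<and> last xs = i \<and> length xs = min i D + 1"
proof (cases "i \<le> D")
  case True
  then show ?thesis using broom_path_walk[OF True assms(3)]
    by (intro exI[of _ "[0..<Suc i]"]) (auto simp del: upt_Suc)
next
  case False
  obtain D' where D': "D = Suc D'" using assms by (cases D) auto
  have w: "walk {0..<n} (broom_adj n D) [0..<Suc D']" using broom_path_walk[of D' D n] assms D' by simp
  moreover have "broom_adj n D D' i" using D' False assms unfolding broom_adj_def by auto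
  ultimately have "walk {0..<n} (broom_adj n D) ([0..<Suc D'] @ [i])"
    using assms unfolding walk_def by (simp add: successively_append_iff del: upt_Suc)
  then show ?thesis using False D' by (intro exI[of _ "[0..<Suc D'] @ [i]"]) (simp del: upt_Suc)
qed

lemma broom_connected_graph:
  assumes "1 \<le> D" "D \<le> n - 1"
  shows "connected_graph {0..<n} (broom_adj n D)"
  using broom_walk_from_start[OF assms]
  by (intro connected_graph_if_reachable_from[OF broom_simple_graph]) fastforce

lemma broom_gdist_start:
  assumes "1 \<le> D" "D \<le> n - 1" "i < n"
  shows "gdist {0..<n} (broom_adj n D) 0 i = min i D"
proof -
  obtain xs where xs: "walk {0..<n} (broom_adj n D) xs" "hd xs = 0" "last xs = i"
      "length xs = min i D + 1"
    using broom_walk_from_start[OF assms] by blast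
  have "gdist {0..<n} (broom_adj n D) 0 i \<le> min i D" using gdist_le_walk_length[OF xs(1-3)] xs(4) by simp
  moreover have "broom_adj n D a b \<Longrightarrow> min b D \<le> min a D + 1" for a b
    unfolding broom_adj_def by auto
  then have "min i D \<le> gdist {0..<n} (broom_adj n D) 0 i"
    using xs by (intro potential_le_gdist[where p = "\<lambda>i. min i D"]) auto
  ultimately show ?thesis by (rule antisym)
qed

lemma te_broom_start:
  fixes lam :: real
  assumes "1 \<le> D" "D \<le> n - 1" "lam \<noteq> 1"
  shows "te {0..<n} (broom_adj n D) lam 0 = broom_bound lam n D"
proof -
  define f where "f k = real k * lam ^ k" for k :: nat
  have "te {0..<n} (broom_adj n D) lam 0 = (\<Sum>i\<in>{1..D} \<union> {Suc D..<n}. f (min i D))"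
    unfolding te_def f_def using assms
    by (intro sum.cong) (auto simp: broom_gdist_start)
  also have "\<dots> = (\<Sum>i=1..D. f (min i D)) + (\<Sum>i\<in>{Suc D..<n}. f (min i D))"
    by (rule sum.union_disjoint) auto
  also have "\<dots> = (\<Sum>i=1..D. f i) + real (n - 1 - D) * f D"
    by (simp add: diff_commute)
  finally show ?thesis
    using broom_bound_eq_layer_bound[OF assms(3)] unfolding layer_bound_def f_def by simp
qed

theorem theorem2:
  fixes V :: "'a set" and E :: "'a \<Rightarrow> 'a \<Rightarrow> bool" and lam :: real
  assumes "0 < lam" and "lam < 1"
    and "simple_graph V E" and "connected_graph V E" and "card V \<ge> 2"
  shows "Min (broom_bound lam (card V) ` {1..card V - 1}) \<le> mte V E lam
    \<and> (\<exists>D\<in>{1..card V - 1}.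
         mte {0..<card V} (broom_adj (card V) D) lam = Min (broom_bound lam (card V) ` {1..card V - 1})
       \<and> te {0..<card V} (broom_adj (card V) D) lam 0 = Min (broom_bound lam (card V) ` {1..card V - 1}))"
proof -
  define n where "n = card V"
  let ?m = "Min (broom_bound lam n ` {1..n - 1})"
  have lam: "lam \<noteq> 1" using assms by simp
  obtain D where D: "D \<in> {1..n - 1}" "broom_bound lam n D = ?m"
    using Min_in[of "broom_bound lam n ` {1..n - 1}"] assms(5) unfolding n_def by fastforce
  let ?B = "broom_adj n D"
  have te0: "te {0..<n} ?B lam 0 = ?m" using te_broom_start[OF _ _ lam] D by simp
  have "?m \<le> mte {0..<n} ?B lam"
    using Min_broom_bound_le_mte[OF broom_simple_graph broom_connected_graph lam] D assms(5)
    unfolding n_def by simp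
  moreover have "mte {0..<n} ?B lam \<le> te {0..<n} ?B lam 0"
    unfolding mte_def using assms(5) unfolding n_def by (intro Min_le) auto
  ultimately have "mte {0..<n} ?B lam = ?m" using te0 by simp
  with te0 D Min_broom_bound_le_mte[OF assms(3,4) lam assms(5)] show ?thesis
    unfolding n_def by blast
qed

end
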